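(* For all integers $k,l\ge1$, $La^*([k]\times[l],\vee_2)=k+l-1$.
   Context: $[k]\times[l]$ is ordered coordinatewise. $\vee_2$ is the poset on three elements $a,b_1,b_2$ whose only relations are $a<b_1$, $a<b_2$. For posets $P,R$, $P$ is a strong subposet of $R$ if there is an injection $i:P\to R$ with $p\le_P p'\iff i(p)\le_R i(p')$. A subset $F\subseteq Q$ is strong $P$-free if $P$ is not a strong subposet of $F$ with the induced order; $La^*(Q,P)$ is the maximum size of a strong $P$-free subset of $Q$. *)

theory Defs
  imports Main
begin

definition strong_subposet ::
  "'a set \<Rightarrow> ('a \<Rightarrow> 'a \<Rightarrow> bool) \<Rightarrow> 'b set \<Rightarrow> ('b \<Rightarrow> 'b \<Rightarrow> bool) \<Rightarrow> bool" where
  "strong_subposet CP leP CR leR \<longleftrightarrow>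
     (\<exists>i. i ` CP \<subseteq> CR \<and> inj_on i CP \<and>
          (\<forall>p\<in>CP. \<forall>p'\<in>CP. leP p p' \<longleftrightarrow> leR (i p) (i p')))"

definition strong_free ::
  "'b set \<Rightarrow> ('b \<Rightarrow> 'b \<Rightarrow> bool) \<Rightarrow> 'a set \<Rightarrow> ('a \<Rightarrow> 'a \<Rightarrow> bool) \<Rightarrow> bool" where
  "strong_free F leQ CP leP \<longleftrightarrow> \<not> strong_subposet CP leP F leQ"

definition La_star ::
  "'b set \<Rightarrow> ('b \<Rightarrow> 'b \<Rightarrow> bool) \<Rightarrow> 'a set \<Rightarrow> ('a \<Rightarrow> 'a \<Rightarrow> bool) \<Rightarrow> nat" where
  "La_star Q leQ CP leP = Max {card F | F. F \<subseteq> Q \<and> strong_free F leQ CP leP}"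

definition grid :: "nat \<Rightarrow> nat \<Rightarrow> (nat \<times> nat) set" where
  "grid k l = {1..k} \<times> {1..l}"

definition grid_le :: "nat \<times> nat \<Rightarrow> nat \<times> nat \<Rightarrow> bool" where
  "grid_le x y \<longleftrightarrow> fst x \<le> fst y \<and> snd x \<le> snd y"

datatype vee2 = Va | Vb1 | Vb2

definition vee2_le :: "vee2 \<Rightarrow> vee2 \<Rightarrow> bool" where
  "vee2_le x y \<longleftrightarrow> x = y \<or> x = Va"

end

theory Submission
  imports Defs
begin

(* An induced V consists of a point below two incomparable points. The L-shaped set made of
   the first column and the top row of [k] x [l] is a chain of k + l - 1 points, so it contains
   no induced V. Conversely, code each point of a V-free family F by its column if it is the
   highest point of F in that column, and by its row otherwise. Column tops are determined by
   their column; if two non-top points x, x' shared a row, with x left of x', then x together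
   with x' and a point above x in its column would form an induced V. Non-top points never lie
   in the top row, so the coding injects F into [k] + [l - 1]. *)

lemma La_star_eqI:
  assumes "finite Q"
    and "F \<subseteq> Q" "strong_free F leQ CP leP" "card F = n"
    and "\<And>G. G \<subseteq> Q \<Longrightarrow> strong_free G leQ CP leP \<Longrightarrow> card G \<le> n"
  shows "La_star Q leQ CP leP = n"
  unfolding La_star_def
proof (rule Max_eqI)
  show "finite {card G |G. G \<subseteq> Q \<and> strong_free G leQ CP leP}"
    by (rule finite_subset[of _ "card ` Pow Q"]) (use assms(1) in auto)
qed (use assms in auto)

lemma strong_subposet_vee2_iff:
  assumes refl: "\<And>x. x \<in> F \<Longrightarrow> le x x"
  shows "strong_subposet (UNIV :: vee2 set) vee2_le F le \<longleftrightarrow>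
    (\<exists>a\<in>F. \<exists>b\<in>F. \<exists>c\<in>F. le a b \<and> le a c \<and> \<not> le b a \<and> \<not> le c a \<and> \<not> le b c \<and> \<not> le c b)"
    (is "?embeds \<longleftrightarrow> ?vee")
proof
  assume ?embeds
  then obtain i where "range i \<subseteq> F" and "\<forall>p q. vee2_le p q \<longleftrightarrow> le (i p) (i q)"
    unfolding strong_subposet_def by blast
  then show ?vee
    by (intro bexI[of _ "i Va"] bexI[of _ "i Vb1"] bexI[of _ "i Vb2"]) (auto simp: vee2_le_def)
next
  assume ?vee
  then obtain a b c where abc: "a \<in> F" "b \<in> F" "c \<in> F"
    and "le a b" "le a c" "\<not> le b a" "\<not> le c a" "\<not> le b c" "\<not> le c b"
    by blast
  define i where "i v = (case v of Va \<Rightarrow> a | Vb1 \<Rightarrow> b | Vb2 \<Rightarrow> c)" for v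
  have "range i \<subseteq> F"
    using abc by (auto simp: i_def split: vee2.splits)
  moreover have "vee2_le p q \<longleftrightarrow> le (i p) (i q)" for p q
    using \<open>le a b\<close> \<open>le a c\<close> \<open>\<not> le b a\<close> \<open>\<not> le c a\<close> \<open>\<not> le b c\<close> \<open>\<not> le c b\<close> refl abc
    by (cases p; cases q) (simp_all add: i_def vee2_le_def)
  moreover from this have "inj i"
    by (metis injI vee2_le_def vee2.distinct)
  ultimately show ?embeds
    unfolding strong_subposet_def by blast
qed

lemma strong_free_vee2_if_chain:
  assumes "\<And>x y. x \<in> F \<Longrightarrow> y \<in> F \<Longrightarrow> le x y \<or> le y x"
  shows "strong_free F le (UNIV :: vee2 set) vee2_le"
  unfolding strong_free_def using assms by (subst strong_subposet_vee2_iff) blast+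

lemma strong_free_grid_vee2_iff:
  "strong_free F grid_le (UNIV :: vee2 set) vee2_le \<longleftrightarrow>
    \<not> (\<exists>a\<in>F. \<exists>b\<in>F. \<exists>c\<in>F. grid_le a b \<and> grid_le a c \<and> \<not> grid_le b a \<and> \<not> grid_le c a
        \<and> \<not> grid_le b c \<and> \<not> grid_le c b)"
  unfolding strong_free_def
  by (rule arg_cong[where f = Not], rule strong_subposet_vee2_iff) (simp add: grid_le_def)

definition has_above_in_column :: "(nat \<times> nat) set \<Rightarrow> nat \<times> nat \<Rightarrow> bool" where
  "has_above_in_column F x \<longleftrightarrow> (\<exists>y\<in>F. fst y = fst x \<and> snd x < snd y)"

definition column_or_row :: "(nat \<times> nat) set \<Rightarrow> nat \<times> nat \<Rightarrow> nat + nat" where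
  "column_or_row F x = (if has_above_in_column F x then Inr (snd x) else Inl (fst x))"

lemma column_top_unique:
  assumes "x \<in> F" "x' \<in> F" "fst x = fst x'"
    and "\<not> has_above_in_column F x" "\<not> has_above_in_column F x'"
  shows "x = x'"
  using assms by (metis has_above_in_column_def linorder_neqE_nat prod.expand)

lemma not_has_above_in_column_if_left_in_row:
  assumes "strong_free F grid_le (UNIV :: vee2 set) vee2_le"
    and "x \<in> F" "x' \<in> F" "fst x < fst x'" "snd x = snd x'"
  shows "\<not> has_above_in_column F x"
proof
  assume "has_above_in_column F x"
  then obtain y where "y \<in> F" "fst y = fst x" "snd x < snd y"
    unfolding has_above_in_column_def by blast
  with assms show False
    unfolding strong_free_grid_vee2_iff grid_le_def
    by (metis leD less_or_eq_imp_le)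
qed

lemma row_of_has_above_in_column_unique:
  assumes "strong_free F grid_le (UNIV :: vee2 set) vee2_le"
    and "x \<in> F" "x' \<in> F" "snd x = snd x'"
    and "has_above_in_column F x" "has_above_in_column F x'"
  shows "x = x'"
  using assms not_has_above_in_column_if_left_in_row[OF assms(1)]
  by (metis linorder_neqE_nat prod.expand)

lemma column_or_row_maps_to:
  assumes "F \<subseteq> grid k l" "x \<in> F"
  shows "column_or_row F x \<in> {1..k} <+> {1..l - 1}"
  using assms by (fastforce simp: column_or_row_def has_above_in_column_def grid_def)

lemma inj_on_column_or_row:
  assumes "strong_free F grid_le (UNIV :: vee2 set) vee2_le"
  shows "inj_on (column_or_row F) F"
proof (rule inj_onI)
  fix x x' assume "x \<in> F" "x' \<in> F" "column_or_row F x = column_or_row F x'"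
  then show "x = x'"
    using column_top_unique row_of_has_above_in_column_unique[OF assms]
    by (auto simp: column_or_row_def split: if_splits)
qed

lemma card_strong_free_vee2_grid_le:
  assumes "F \<subseteq> grid k l" "strong_free F grid_le (UNIV :: vee2 set) vee2_le" "l \<ge> 1"
  shows "card F \<le> k + l - 1"
proof -
  have "card F \<le> card ({1..k} <+> {1..l - 1})"
    using inj_on_column_or_row[OF assms(2)] column_or_row_maps_to[OF assms(1)]
    by (intro card_inj_on_le) auto
  then show ?thesis
    using assms(3) by (simp add: card_Plus)
qed

definition grid_hook :: "nat \<Rightarrow> nat \<Rightarrow> (nat \<times> nat) set" where
  "grid_hook k l = {1} \<times> {1..l} \<union> {2..k} \<times> {l}"

lemma grid_hook_subset: "k \<ge> 1 \<Longrightarrow> l \<ge> 1 \<Longrightarrow> grid_hook k l \<subseteq> grid k l"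
  by (auto simp: grid_hook_def grid_def)

lemma strong_free_vee2_grid_hook: "strong_free (grid_hook k l) grid_le (UNIV :: vee2 set) vee2_le"
  by (rule strong_free_vee2_if_chain) (auto simp: grid_hook_def grid_le_def)

lemma card_grid_hook:
  assumes "k \<ge> 1" "l \<ge> 1"
  shows "card (grid_hook k l) = k + l - 1"
proof -
  have "card (grid_hook k l) = card ({1::nat} \<times> {1..l}) + card ({2..k} \<times> {l})"
    unfolding grid_hook_def by (rule card_Un_disjoint) auto
  then show ?thesis
    using assms by (simp add: card_cartesian_product)
qed

theorem theorem1p5:
  fixes k l :: nat
  assumes "k \<ge> 1" and "l \<ge> 1"
  shows "La_star (grid k l) grid_le (UNIV :: vee2 set) vee2_le = k + l - 1"
proof (rule La_star_eqI)
  show "finite (grid k l)"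
    by (simp add: grid_def)
  show "grid_hook k l \<subseteq> grid k l"
    using assms by (rule grid_hook_subset)
  show "strong_free (grid_hook k l) grid_le UNIV vee2_le"
    by (rule strong_free_vee2_grid_hook)
  show "card (grid_hook k l) = k + l - 1"
    using assms by (rule card_grid_hook)
  show "card G \<le> k + l - 1" if "G \<subseteq> grid k l" "strong_free G grid_le UNIV vee2_le" for G
    using that assms(2) by (rule card_strong_free_vee2_grid_le)
qed

end
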